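(* Let $m\ge2$, let $\mathbb{A}=(a_{i_1\ldots i_m})$ be a nonnegative tensor of order $m$ and dimension $n$, and let $\mathbb{B}=(b_{i_1\ldots i_{m+1}})$ be the nonnegative tensor of order $m+1$ and dimension $n$ with $b_{i_1\ldots i_mi_{m+1}}=a_{i_1\ldots i_m}$ if $i_{m+1}=i_m$ and $b_{i_1\ldots i_mi_{m+1}}=0$ otherwise. Then (i) for every $j\in[n]$, $\mathbb{A}$ is $j$-primitive if and only if $\mathbb{B}$ is $j$-primitive, and in that case $\gamma_j(\mathbb{B})=\gamma_j(\mathbb{A})$; (ii) $\mathbb{A}$ is primitive if and only if $\mathbb{B}$ is primitive, and then $\gamma(\mathbb{B})=\gamma(\mathbb{A})$.
   Context: General product of dimension-$n$ tensors: for $\mathbb{A}$ of order $m\ge2$ and $\mathbb{C}$ of order $k\ge1$, $(\mathbb{A}\mathbb{C})_{i\alpha_1\ldots\alpha_{m-1}}=\sum_{i_2,\ldots,i_m=1}^n a_{ii_2\ldots i_m}c_{i_2\alpha_1}\cdots c_{i_m\alpha_{m-1}}$ ($\alpha_l\in[n]^{k-1}$); it is associative and $\mathbb{A}^k$ denotes the $k$-fold power. The majorization matrix is $(M(\mathbb{C}))_{ij}=c_{ij\ldots j}$. A nonnegative tensor $\mathbb{A}$ is primitive if $M(\mathbb{A}^r)>0$ entrywise for some $r\ge1$, and the least such $r$ is $\gamma(\mathbb{A})$. For $j\in[n]$, $\mathbb{A}$ is $j$-primitive if there is $k\ge1$ with $(M(\mathbb{A}^k))_{uj}>0$ for all $u\in[n]$;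 the least such $k$ is $\gamma_j(\mathbb{A})$. *)

theory Defs
  imports Complex_Main
begin

text \<open>Tensors of order m and dimension n are represented as functions
  nat list => real; only index lists of length m with entries in {0..<n}
  are meaningful (the index set [n] is rendered 0-based as {0..<n}).\<close>

type_synonym tensor = "nat list \<Rightarrow> real"

definition valid_idx :: "nat \<Rightarrow> nat \<Rightarrow> nat list \<Rightarrow> bool" where
  "valid_idx n k xs \<longleftrightarrow> length xs = k \<and> set xs \<subseteq> {..<n}"

definition nonneg_tensor :: "nat \<Rightarrow> nat \<Rightarrow> tensor \<Rightarrow> bool" where
  "nonneg_tensor n m A \<longleftrightarrow> (\<forall>xs. valid_idx n m xs \<longrightarrow> A xs \<ge> 0)"

fun chunks :: "nat \<Rightarrow> nat \<Rightarrow> 'a list \<Rightarrow> 'a list list" where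
  "chunks 0 l xs = []"
| "chunks (Suc c) l xs = take l xs # chunks c l (drop l xs)"

text \<open>General product: A of order m, C of order k, both of dimension n.
  (A C)_{i alpha_1 ... alpha_{m-1}} =
     sum_{i_2..i_m} a_{i i_2 .. i_m} c_{i_2 alpha_1} ... c_{i_m alpha_{m-1}}.\<close>
definition tprod :: "nat \<Rightarrow> nat \<Rightarrow> nat \<Rightarrow> tensor \<Rightarrow> tensor \<Rightarrow> tensor" where
  "tprod n m k A C = (\<lambda>idx.
     \<Sum>is\<in>{is. valid_idx n (m - 1) is}.
       A (hd idx # is) *
       (\<Prod>l<m - 1. C ((is ! l) # (chunks (m - 1) (k - 1) (tl idx) ! l))))"

text \<open>Powers A^r (r >= 1) of a tensor of order m; A^r has order (m-1)^r + 1.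
  A^(r+1) = A A^r.  The value at r = 0 is an unused placeholder.\<close>
primrec tpow :: "nat \<Rightarrow> nat \<Rightarrow> tensor \<Rightarrow> nat \<Rightarrow> tensor" where
  "tpow n m A 0 = A"
| "tpow n m A (Suc r) =
     (if r = 0 then A else tprod n m ((m - 1) ^ r + 1) A (tpow n m A r))"

definition tpow_order :: "nat \<Rightarrow> nat \<Rightarrow> nat" where
  "tpow_order m r = (m - 1) ^ r + 1"

definition majorization :: "nat \<Rightarrow> tensor \<Rightarrow> nat \<Rightarrow> nat \<Rightarrow> real" where
  "majorization k C i j = C (i # replicate (k - 1) j)"

definition Mpow :: "nat \<Rightarrow> nat \<Rightarrow> tensor \<Rightarrow> nat \<Rightarrow> nat \<Rightarrow> nat \<Rightarrow> real" where
  "Mpow n m A r = majorization (tpow_order m r) (tpow n m A r)"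

definition primitive :: "nat \<Rightarrow> nat \<Rightarrow> tensor \<Rightarrow> bool" where
  "primitive n m A \<longleftrightarrow> (\<exists>r\<ge>1. \<forall>i<n. \<forall>j<n. Mpow n m A r i j > 0)"

definition prim_exponent :: "nat \<Rightarrow> nat \<Rightarrow> tensor \<Rightarrow> nat" where
  "prim_exponent n m A = (LEAST r. r \<ge> 1 \<and> (\<forall>i<n. \<forall>j<n. Mpow n m A r i j > 0))"

definition j_primitive :: "nat \<Rightarrow> nat \<Rightarrow> tensor \<Rightarrow> nat \<Rightarrow> bool" where
  "j_primitive n m A j \<longleftrightarrow> (\<exists>k\<ge>1. \<forall>u<n. Mpow n m A k u j > 0)"

definition j_prim_exponent :: "nat \<Rightarrow> nat \<Rightarrow> tensor \<Rightarrow> nat \<Rightarrow> nat" where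
  "j_prim_exponent n m A j = (LEAST k. k \<ge> 1 \<and> (\<forall>u<n. Mpow n m A k u j > 0))"

end

theory Submission
  imports Defs
begin

text \<open>Only the positivity pattern of the majorization matrices M(A^r) enters the definitions of
  (j-)primitivity and of the exponents. For a nonnegative tensor, M(A^(r+1))_ij > 0 iff some
  index list ks has a_(i ks) > 0 and M(A^r)_(ks_l, j) > 0 for every l. The tensor B is positive
  exactly on the index lists of A with the last entry repeated, and repeating an entry of ks does
  not change the set of entries that must satisfy the second condition; by induction on r, the
  positivity patterns of M(A^r) and M(B^r) coincide.\<close>

definition extend_tensor :: "nat \<Rightarrow> tensor \<Rightarrow> tensor" where
  "extend_tensor m A xs = (if xs ! m = xs ! (m - 1) then A (take m xs) else 0)"

lemma valid_idx_nth_less: "valid_idx n k ks \<Longrightarrow> l < k \<Longrightarrow> ks ! l < n"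
  by (metis valid_idx_def lessThan_iff nth_mem subsetD)

lemma finite_valid_idx: "finite {ks. valid_idx n k ks}"
proof -
  have "{ks. valid_idx n k ks} = {xs. set xs \<subseteq> {..<n} \<and> length xs = k}"
    by (auto simp: valid_idx_def)
  then show ?thesis
    using finite_lists_length_eq[of "{..<n}" k] by simp
qed

lemma valid_idx_take: "valid_idx n k xs \<Longrightarrow> l \<le> k \<Longrightarrow> valid_idx n l (take l xs)"
  by (auto simp: valid_idx_def dest: in_set_takeD)

lemma sum_pos_iff_ex_pos:
  fixes f :: "'a \<Rightarrow> 'b :: ordered_comm_monoid_add"
  assumes "finite S" "\<And>x. x \<in> S \<Longrightarrow> f x \<ge> 0"
  shows "sum f S > 0 \<longleftrightarrow> (\<exists>x\<in>S. f x > 0)"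
  using assms sum_nonneg[of S f] sum_nonneg_eq_0_iff[of S f]
  by (auto simp: order_less_le)

lemma prod_pos_iff_all_pos:
  fixes f :: "'a \<Rightarrow> 'b :: linordered_idom"
  assumes "finite S" "\<And>x. x \<in> S \<Longrightarrow> f x \<ge> 0"
  shows "prod f S > 0 \<longleftrightarrow> (\<forall>x\<in>S. f x > 0)"
  using assms prod_nonneg[of S f] prod_zero_iff[of S f] prod_pos[of S f]
  by (auto simp: order_less_le)

lemma chunks_replicate:
  "c * l \<le> N \<Longrightarrow> k < c \<Longrightarrow> chunks c l (replicate N x) ! k = replicate l x"
proof (induction c arbitrary: N k)
  case 0
  then show ?case by simp
next
  case (Suc c)
  then show ?case
    by (cases k) (simp_all add: min_def Suc.IH[of "N - l"])
qed

lemma Mpow_1: "Mpow n m T 1 i j = T (i # replicate (m - 1) j)"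
  by (simp add: Mpow_def majorization_def tpow_order_def)

lemma Mpow_Suc:
  assumes "r \<ge> 1"
  shows "Mpow n m T (Suc r) i j =
    (\<Sum>ks\<in>{ks. valid_idx n (m - 1) ks}. T (i # ks) * (\<Prod>l<m - 1. Mpow n m T r (ks ! l) j))"
proof -
  have "chunks (m - 1) ((m - 1) ^ r) (replicate ((m - 1) ^ Suc r) j) ! l
      = replicate ((m - 1) ^ r) j" if "l < m - 1" for l
    using that by (intro chunks_replicate) simp_all
  then show ?thesis
    using assms by (simp add: Mpow_def majorization_def tpow_order_def tprod_def)
qed

lemma Mpow_nonneg:
  assumes "nonneg_tensor n m T" "m \<ge> 1" "r \<ge> 1" "i < n" "j < n"
  shows "Mpow n m T r i j \<ge> 0"
  using assms(3,4)
proof (induction r arbitrary: i rule: dec_induct)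
  case base
  have "valid_idx n m (i # replicate (m - 1) j)"
    using assms base by (auto simp: valid_idx_def)
  then show ?case
    using assms(1) unfolding Mpow_1 nonneg_tensor_def by blast
next
  case (step r)
  have "T (i # ks) \<ge> 0" if "valid_idx n (m - 1) ks" for ks
    using that step.prems assms(1,2) by (auto simp: nonneg_tensor_def valid_idx_def)
  then show ?case
    unfolding Mpow_Suc[OF step.hyps(1)]
    by (intro sum_nonneg mult_nonneg_nonneg prod_nonneg)
       (simp_all add: step.IH valid_idx_nth_less)
qed

lemma Mpow_Suc_pos_iff:
  assumes "nonneg_tensor n m T" "m \<ge> 1" "r \<ge> 1" "i < n" "j < n"
  shows "Mpow n m T (Suc r) i j > 0 \<longleftrightarrow>
    (\<exists>ks. valid_idx n (m - 1) ks \<and> T (i # ks) > 0 \<and> (\<forall>l<m - 1. Mpow n m T r (ks ! l) j > 0))"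
proof -
  have T_nonneg: "T (i # ks) \<ge> 0" if "valid_idx n (m - 1) ks" for ks
    using that assms(1,2,4) by (auto simp: nonneg_tensor_def valid_idx_def)
  have M_nonneg: "Mpow n m T r (ks ! l) j \<ge> 0" if "valid_idx n (m - 1) ks" "l < m - 1" for ks l
    using Mpow_nonneg[OF assms(1-3) valid_idx_nth_less[OF that] assms(5)] .
  have prod_nonneg: "(\<Prod>l<m - 1. Mpow n m T r (ks ! l) j) \<ge> 0" if "valid_idx n (m - 1) ks" for ks
    using M_nonneg[OF that] by (intro prod_nonneg) simp
  have summand_pos: "T (i # ks) * (\<Prod>l<m - 1. Mpow n m T r (ks ! l) j) > 0 \<longleftrightarrow>
      T (i # ks) > 0 \<and> (\<forall>l<m - 1. Mpow n m T r (ks ! l) j > 0)"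
    if "valid_idx n (m - 1) ks" for ks
  proof -
    have "(\<Prod>l<m - 1. Mpow n m T r (ks ! l) j) > 0 \<longleftrightarrow> (\<forall>l<m - 1. Mpow n m T r (ks ! l) j > 0)"
      using M_nonneg[OF that] by (subst prod_pos_iff_all_pos) auto
    then show ?thesis
      using T_nonneg[OF that] prod_nonneg[OF that] by (auto simp: zero_less_mult_iff)
  qed
  have "Mpow n m T (Suc r) i j > 0 \<longleftrightarrow>
      (\<exists>ks\<in>{ks. valid_idx n (m - 1) ks}. T (i # ks) * (\<Prod>l<m - 1. Mpow n m T r (ks ! l) j) > 0)"
    unfolding Mpow_Suc[OF assms(3)]
    using T_nonneg prod_nonneg
    by (intro sum_pos_iff_ex_pos finite_valid_idx) (simp add: mult_nonneg_nonneg)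
  also have "\<dots> \<longleftrightarrow>
      (\<exists>ks. valid_idx n (m - 1) ks \<and> T (i # ks) > 0 \<and> (\<forall>l<m - 1. Mpow n m T r (ks ! l) j > 0))"
    using summand_pos by auto
  finally show ?thesis .
qed

lemma nonneg_tensor_extend:
  "nonneg_tensor n m A \<Longrightarrow> nonneg_tensor n (m + 1) (extend_tensor m A)"
  unfolding nonneg_tensor_def extend_tensor_def
  using valid_idx_take[of n "m + 1" _ m] by simp

lemma Mpow_1_extend:
  assumes "m \<ge> 2"
  shows "Mpow n (m + 1) (extend_tensor m A) 1 i j = Mpow n m A 1 i j"
proof -
  have "(i # replicate m j) ! m = j" "(i # replicate m j) ! (m - 1) = j"
    using assms by (auto simp: nth_Cons')
  moreover have "take m (i # replicate m j) = i # replicate (m - 1) j"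
    using assms by (simp add: take_Cons' take_replicate)
  ultimately show ?thesis
    unfolding Mpow_1 extend_tensor_def by simp
qed

text \<open>The witnesses for B are those for A with their last entry duplicated.\<close>

lemma ex_positive_extend_iff:
  assumes "m \<ge> 2"
  shows "(\<exists>ks. valid_idx n m ks \<and> extend_tensor m A (i # ks) > 0 \<and> (\<forall>l<m. P (ks ! l))) \<longleftrightarrow>
         (\<exists>ks. valid_idx n (m - 1) ks \<and> A (i # ks) > 0 \<and> (\<forall>l<m - 1. P (ks ! l)))"
proof
  assume "\<exists>ks. valid_idx n m ks \<and> extend_tensor m A (i # ks) > 0 \<and> (\<forall>l<m. P (ks ! l))"
  then obtain ks where ks: "valid_idx n m ks" "extend_tensor m A (i # ks) > 0" "\<forall>l<m. P (ks ! l)"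
    by blast
  have "take m (i # ks) = i # take (m - 1) ks"
    using assms by (cases m) auto
  then have "A (i # take (m - 1) ks) > 0"
    using ks(2) by (simp add: extend_tensor_def split: if_splits)
  moreover have "valid_idx n (m - 1) (take (m - 1) ks)"
    using ks(1) by (simp add: valid_idx_take)
  ultimately show "\<exists>ks. valid_idx n (m - 1) ks \<and> A (i # ks) > 0 \<and> (\<forall>l<m - 1. P (ks ! l))"
    using ks(3) by (intro exI[of _ "take (m - 1) ks"]) auto
next
  assume "\<exists>ks. valid_idx n (m - 1) ks \<and> A (i # ks) > 0 \<and> (\<forall>l<m - 1. P (ks ! l))"
  then obtain ks where ks: "valid_idx n (m - 1) ks" "A (i # ks) > 0" "\<forall>l<m - 1. P (ks ! l)"
    by blast
  define js where "js = ks @ [ks ! (m - 2)]"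
  have len: "length ks = m - 1"
    using ks(1) by (simp add: valid_idx_def)
  have js_nth: "js ! l = ks ! (min l (m - 2))" if "l < m" for l
    using that len assms by (auto simp: js_def nth_append min_def)
  have "valid_idx n m js"
    using ks(1) len assms valid_idx_nth_less[OF ks(1), of "m - 2"]
    by (auto simp: valid_idx_def js_def)
  moreover have "extend_tensor m A (i # js) > 0"
  proof -
    have "(i # js) ! m = (i # js) ! (m - 1)"
      using assms js_nth[of "m - 1"] js_nth[of "m - 2"] by (simp add: nth_Cons' numeral_2_eq_2)
    moreover have "take m (i # js) = i # ks"
      using len assms by (cases m) (auto simp: js_def)
    ultimately show ?thesis
      using ks(2) by (simp add: extend_tensor_def)
  qed
  moreover have "\<forall>l<m. P (js ! l)"
    using ks(3) assms by (auto simp: js_nth)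
  ultimately show "\<exists>ks. valid_idx n m ks \<and> extend_tensor m A (i # ks) > 0 \<and> (\<forall>l<m. P (ks ! l))"
    by blast
qed

lemma Mpow_extend_pos_iff:
  assumes "m \<ge> 2" "nonneg_tensor n m A" "r \<ge> 1" "i < n" "j < n"
  shows "Mpow n (m + 1) (extend_tensor m A) r i j > 0 \<longleftrightarrow> Mpow n m A r i j > 0"
  using assms(3,4)
proof (induction r arbitrary: i rule: dec_induct)
  case base
  show ?case
    using Mpow_1_extend[OF assms(1), of n A i j] by simp
next
  case (step r)
  have "Mpow n (m + 1) (extend_tensor m A) (Suc r) i j > 0 \<longleftrightarrow>
      (\<exists>ks. valid_idx n m ks \<and> extend_tensor m A (i # ks) > 0 \<and>
        (\<forall>l<m. Mpow n (m + 1) (extend_tensor m A) r (ks ! l) j > 0))"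
    using Mpow_Suc_pos_iff[OF nonneg_tensor_extend[OF assms(2)] _ step.hyps(1) step.prems assms(5)]
    by simp
  also have "\<dots> \<longleftrightarrow>
      (\<exists>ks. valid_idx n m ks \<and> extend_tensor m A (i # ks) > 0 \<and> (\<forall>l<m. Mpow n m A r (ks ! l) j > 0))"
  proof -
    have "(\<forall>l<m. Mpow n (m + 1) (extend_tensor m A) r (ks ! l) j > 0) \<longleftrightarrow>
        (\<forall>l<m. Mpow n m A r (ks ! l) j > 0)" if "valid_idx n m ks" for ks
      using step.IH valid_idx_nth_less[OF that] by auto
    then show ?thesis by blast
  qed
  also have "\<dots> \<longleftrightarrow>
      (\<exists>ks. valid_idx n (m - 1) ks \<and> A (i # ks) > 0 \<and> (\<forall>l<m - 1. Mpow n m A r (ks ! l) j > 0))"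
    using ex_positive_extend_iff[OF assms(1)] .
  also have "\<dots> \<longleftrightarrow> Mpow n m A (Suc r) i j > 0"
    using Mpow_Suc_pos_iff[OF assms(2) _ step.hyps(1) step.prems assms(5)] assms(1) by simp
  finally show ?case .
qed

theorem proposition4p9:
  fixes n m :: nat and A B :: tensor
  assumes "m \<ge> 2"
    and "nonneg_tensor n m A"
    and "\<And>xs. B xs = (if xs ! m = xs ! (m - 1) then A (take m xs) else 0)"
  shows "(\<forall>j<n. (j_primitive n m A j \<longleftrightarrow> j_primitive n (m + 1) B j) \<and>
                (j_primitive n m A j \<longrightarrow> j_prim_exponent n (m + 1) B j = j_prim_exponent n m A j))
       \<and> (primitive n m A \<longleftrightarrow> primitive n (m + 1) B)
       \<and> (primitive n m A \<longrightarrow> prim_exponent n (m + 1) B = prim_exponent n m A)"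
proof -
  have "B = extend_tensor m A"
    using assms(3) by (simp add: fun_eq_iff extend_tensor_def)
  then have pos_iff: "Mpow n (m + 1) B r i j > 0 \<longleftrightarrow> Mpow n m A r i j > 0"
    if "r \<ge> 1" "i < n" "j < n" for r i j
    using Mpow_extend_pos_iff[OF assms(1,2) that] by simp
  have j_cond: "(\<lambda>k. k \<ge> 1 \<and> (\<forall>u<n. Mpow n (m + 1) B k u j > 0)) =
      (\<lambda>k. k \<ge> 1 \<and> (\<forall>u<n. Mpow n m A k u j > 0))" if "j < n" for j
    using pos_iff that by (intro ext) blast
  have cond: "(\<lambda>r. r \<ge> 1 \<and> (\<forall>i<n. \<forall>j<n. Mpow n (m + 1) B r i j > 0)) =
      (\<lambda>r. r \<ge> 1 \<and> (\<forall>i<n. \<forall>j<n. Mpow n m A r i j > 0))"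
    using pos_iff by (intro ext) blast
  show ?thesis
    unfolding j_primitive_def j_prim_exponent_def primitive_def prim_exponent_def
    using j_cond cond by simp
qed

end
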